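(* Let $f:\mathbb{R}^n\to\mathbb{R}$ be continuously differentiable with $L_f$-Lipschitz gradient, let $g:\mathbb{R}^n\to\mathbb{R}\cup\{+\infty\}$ be proper, closed and $M$-weakly convex, $\varphi=f+g$, and consider the MINFBE algorithm with parameters $\gamma_0>0$, $\xi\in(0,1)$, $\beta\in[0,1)$. If $0<\gamma<\min\{(1-\beta)/L_f,1/M\}$, then for every $w\in\mathbb{R}^n$ the backtracking condition $$f(T_\gamma(w))>f(w)-\gamma\langle\nabla f(w),R_\gamma(w)\rangle+\tfrac{(1-\beta)\gamma}{2}\|R_\gamma(w)\|^2$$ does not hold. Moreover, the step sizes of MINFBE satisfy $\gamma_k\ge\gamma_\infty\ge\min\{\gamma_0,\xi(1-\beta)/L_f,1/M\}>0$ for all $k$, where $\gamma_\infty=\min_{i}\gamma_i$.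
   Context: $g$ is $M$-weakly convex if $g+\frac M2\|\cdot\|^2$ is convex. For $\gamma>0$: $T_\gamma(x)=\operatorname{prox}_{\gamma g}(x-\gamma\nabla f(x))$ with $\operatorname{prox}_{\gamma g}(x)=\arg\min_u\{g(u)+\frac1{2\gamma}\|u-x\|^2\}$, $R_\gamma(x)=\gamma^{-1}(x-T_\gamma(x))$, and $\varphi_\gamma(x)=\min_u\{f(x)+\langle\nabla f(x),u-x\rangle+g(u)+\frac1{2\gamma}\|u-x\|^2\}$. MINFBE: given $x^0$, $\gamma_0>0$, $\xi\in(0,1)$, $\beta\in[0,1)$, set $k=0$ and repeat: (1) if $R_{\gamma_k}(x^k)=0$ stop; (2) choose $d^k$ with $\langle d^k,\nabla\varphi_{\gamma_k}(x^k)\rangle\le0$; (3) choose $\tau_k\ge0$ and $w^k=x^k+\tau_kd^k$ with $\varphi_{\gamma_k}(w^k)\le\varphi_{\gamma_k}(x^k)$; (4) if $f(T_{\gamma_k}(w^k))>f(w^k)-\gamma_k\langle\nabla f(w^k),R_{\gamma_k}(w^k)\rangle+\frac{(1-\beta)\gamma_k}{2}\|R_{\gamma_k}(w^k)\|^2$, replace $\gamma_k$ by $\xi\gamma_k$ and go back to (1) with the same $k$; (5) otherwise set $x^{k+1}=T_{\gamma_k}(w^k)$, $\gamma_{k+1}=\gamma_k$, $k\leftarrow k+1$ and go to (1). *)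

theory Defs
  imports "HOL-Analysis.Analysis"
begin

text \<open>Extended-real valued functions g : R^n -> R \<union> {+\<infinity>} are modelled as 'a \<Rightarrow> ereal.\<close>

definition proper_fun :: "('a \<Rightarrow> ereal) \<Rightarrow> bool" where
  "proper_fun g \<longleftrightarrow> (\<exists>x. g x \<noteq> \<infinity>) \<and> (\<forall>x. g x \<noteq> -\<infinity>)"

definition closed_fun :: "('a::topological_space \<Rightarrow> ereal) \<Rightarrow> bool" where
  "closed_fun g \<longleftrightarrow> closed {p :: 'a \<times> real. g (fst p) \<le> ereal (snd p)}"

definition ereal_convex :: "('a::real_vector \<Rightarrow> ereal) \<Rightarrow> bool" where
  "ereal_convex h \<longleftrightarrow> (\<forall>x y t. 0 \<le> t \<and> t \<le> 1 \<longrightarrow>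
      h ((1 - t) *\<^sub>R x + t *\<^sub>R y) \<le> ereal (1 - t) * h x + ereal t * h y)"

definition weakly_convex :: "real \<Rightarrow> ('a::real_normed_vector \<Rightarrow> ereal) \<Rightarrow> bool" where
  "weakly_convex M g \<longleftrightarrow> ereal_convex (\<lambda>z. g z + ereal (M / 2 * (norm z)\<^sup>2))"

text \<open>prox_{\<gamma> g}(x): a minimiser of g(u) + |u-x|^2/(2\<gamma>) (unique when 0 < \<gamma> < 1/M)\<close>
definition prox :: "('a::real_normed_vector \<Rightarrow> ereal) \<Rightarrow> real \<Rightarrow> 'a \<Rightarrow> 'a" where
  "prox g \<gamma> x = (SOME u. \<forall>v. g u + ereal ((norm (u - x))\<^sup>2 / (2 * \<gamma>))
                              \<le> g v + ereal ((norm (v - x))\<^sup>2 / (2 * \<gamma>)))"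

definition fb_T :: "('a::real_normed_vector \<Rightarrow> 'a) \<Rightarrow> ('a \<Rightarrow> ereal) \<Rightarrow> real \<Rightarrow> 'a \<Rightarrow> 'a" where
  "fb_T df g \<gamma> x = prox g \<gamma> (x - \<gamma> *\<^sub>R df x)"

definition fb_R :: "('a::real_normed_vector \<Rightarrow> 'a) \<Rightarrow> ('a \<Rightarrow> ereal) \<Rightarrow> real \<Rightarrow> 'a \<Rightarrow> 'a" where
  "fb_R df g \<gamma> x = (1 / \<gamma>) *\<^sub>R (x - fb_T df g \<gamma> x)"

definition fbe :: "('a::real_inner \<Rightarrow> real) \<Rightarrow> ('a \<Rightarrow> 'a) \<Rightarrow> ('a \<Rightarrow> ereal) \<Rightarrow> real \<Rightarrow> 'a \<Rightarrow> ereal" where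
  "fbe f df g \<gamma> x = (INF u. ereal (f x + inner (df x) (u - x) + (norm (u - x))\<^sup>2 / (2 * \<gamma>)) + g u)"

definition backtrack_cond :: "('a::real_inner \<Rightarrow> real) \<Rightarrow> ('a \<Rightarrow> 'a) \<Rightarrow> ('a \<Rightarrow> ereal) \<Rightarrow> real \<Rightarrow> real \<Rightarrow> 'a \<Rightarrow> bool" where
  "backtrack_cond f df g \<beta> \<gamma> w \<longleftrightarrow>
     f (fb_T df g \<gamma> w) > f w - \<gamma> * inner (df w) (fb_R df g \<gamma> w)
                          + (1 - \<beta>) * \<gamma> / 2 * (norm (fb_R df g \<gamma> w))\<^sup>2"

text \<open>steps (2)-(3): admissible direction d and stepsize \<tau>, giving w = x + \<tau> d.
  The direction condition is imposed whenever \<nabla>\<phi>_\<gamma>(x) exists.\<close>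
definition admissible_trial :: "('a::real_inner \<Rightarrow> real) \<Rightarrow> ('a \<Rightarrow> 'a) \<Rightarrow> ('a \<Rightarrow> ereal) \<Rightarrow> real \<Rightarrow> 'a \<Rightarrow> 'a \<Rightarrow> real \<Rightarrow> bool" where
  "admissible_trial f df g \<gamma> x d \<tau> \<longleftrightarrow>
     (\<forall>G. ((\<lambda>y. real_of_ereal (fbe f df g \<gamma> y)) has_derivative (\<lambda>h. inner G h)) (at x)
          \<longrightarrow> inner d G \<le> 0)
     \<and> \<tau> \<ge> 0 \<and> fbe f df g \<gamma> (x + \<tau> *\<^sub>R d) \<le> fbe f df g \<gamma> x"

text \<open>One completed outer iteration k of MINFBE: starting from x = x^k with current stepsize
  \<gamma>p (= \<gamma>_{k-1}, resp. \<gamma>_0 for k = 0), after j backtracking reductions (each of which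
  passed step (1) and produced a trial point violating the test) the stepsize \<gamma> = \<xi>^j \<gamma>p is
  accepted at the point w = w^k and x' = x^{k+1} = T_\<gamma>(w).\<close>
definition minfbe_step :: "('a::real_inner \<Rightarrow> real) \<Rightarrow> ('a \<Rightarrow> 'a) \<Rightarrow> ('a \<Rightarrow> ereal) \<Rightarrow> real \<Rightarrow> real
     \<Rightarrow> real \<Rightarrow> 'a \<Rightarrow> real \<Rightarrow> 'a \<Rightarrow> 'a \<Rightarrow> bool" where
  "minfbe_step f df g \<xi> \<beta> \<gamma>p x \<gamma> w x' \<longleftrightarrow>
     (\<exists>j::nat. \<gamma> = \<xi> ^ j * \<gamma>p
        \<and> (\<forall>i<j. fb_R df g (\<xi> ^ i * \<gamma>p) x \<noteq> 0
              \<and> (\<exists>d \<tau>. admissible_trial f df g (\<xi> ^ i * \<gamma>p) x d \<tau>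
                      \<and> backtrack_cond f df g \<beta> (\<xi> ^ i * \<gamma>p) (x + \<tau> *\<^sub>R d)))
        \<and> fb_R df g \<gamma> x \<noteq> 0
        \<and> (\<exists>d \<tau>. admissible_trial f df g \<gamma> x d \<tau> \<and> w = x + \<tau> *\<^sub>R d)
        \<and> \<not> backtrack_cond f df g \<beta> \<gamma> w
        \<and> x' = fb_T df g \<gamma> w)"

definition minfbe_run :: "('a::real_inner \<Rightarrow> real) \<Rightarrow> ('a \<Rightarrow> 'a) \<Rightarrow> ('a \<Rightarrow> ereal) \<Rightarrow> real \<Rightarrow> real \<Rightarrow> real
     \<Rightarrow> nat \<Rightarrow> (nat \<Rightarrow> 'a) \<Rightarrow> (nat \<Rightarrow> 'a) \<Rightarrow> (nat \<Rightarrow> real) \<Rightarrow> bool" where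
  "minfbe_run f df g \<gamma>0 \<xi> \<beta> K x w \<gamma> \<longleftrightarrow>
     (\<forall>k<K. minfbe_step f df g \<xi> \<beta> (if k = 0 then \<gamma>0 else \<gamma> (k - 1)) (x k) (\<gamma> k) (w k) (x (Suc k)))"

end

theory Submission
  imports Defs
begin

text \<open>An \<open>L\<^sub>f\<close>-Lipschitz gradient gives the quadratic upper bound
  \<open>f(y) \<le> f(x) + \<langle>\<nabla>f(x), y - x\<rangle> + L\<^sub>f/2 \<parallel>y - x\<parallel>\<^sup>2\<close>. Since \<open>T\<^sub>\<gamma>(w) = w - \<gamma> R\<^sub>\<gamma>(w)\<close>, this bound
  at \<open>y = T\<^sub>\<gamma>(w)\<close> is exactly the negation of the backtracking test as soon as \<open>\<gamma> L\<^sub>f \<le> 1 - \<beta>\<close>.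
  Hence a stepsize is only ever reduced from a value \<open>\<gamma> > (1 - \<beta>)/L\<^sub>f\<close>, so every accepted
  stepsize is at least \<open>min \<gamma>\<^sub>0 (\<xi> (1 - \<beta>)/L\<^sub>f)\<close>. No property of \<open>g\<close> (and hence no bound
  involving \<open>M\<close>) is needed: \<open>T\<^sub>\<gamma>(w)\<close> enters only through the identity above.\<close>

lemma lipschitz_gradient_quadratic_upper_bound:
  fixes f :: "'a::real_inner \<Rightarrow> real"
  assumes f_grad: "\<And>x. (f has_derivative (\<lambda>h. inner (df x) h)) (at x)"
    and df_lip: "\<And>x y. norm (df x - df y) \<le> Lf * norm (x - y)"
  shows "f y \<le> f x + inner (df x) (y - x) + Lf / 2 * (norm (y - x))\<^sup>2"
proof -
  define d where "d = y - x"
  define \<phi> where "\<phi> t = f (x + t *\<^sub>R d) - t * inner (df x) d - Lf / 2 * t^2 * (norm d)^2" for t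
  define \<phi>' where "\<phi>' t = inner (df (x + t *\<^sub>R d)) d - inner (df x) d - Lf * t * (norm d)^2" for t
  have \<phi>_deriv: "(\<phi> has_real_derivative \<phi>' t) (at t)" for t
  proof -
    have "((\<lambda>t. x + t *\<^sub>R d) has_derivative (\<lambda>h. h *\<^sub>R d)) (at t)"
      by (auto intro!: derivative_eq_intros)
    from has_derivative_compose[OF this f_grad]
    have f_line_deriv: "((\<lambda>t. f (x + t *\<^sub>R d)) has_real_derivative inner (df (x + t *\<^sub>R d)) d) (at t)"
      unfolding has_field_derivative_def by (simp add: o_def mult.commute[of _ "inner _ d"])
    show ?thesis unfolding \<phi>_def \<phi>'_def
      by (rule f_line_deriv derivative_eq_intros refl | simp)+
  qed
  have \<phi>'_nonpos: "\<phi>' t \<le> 0" if "0 \<le> t" for t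
  proof -
    have "inner (df (x + t *\<^sub>R d) - df x) d \<le> norm (df (x + t *\<^sub>R d) - df x) * norm d"
      by (rule norm_cauchy_schwarz)
    also have "\<dots> \<le> Lf * norm (t *\<^sub>R d) * norm d"
      using df_lip[of "x + t *\<^sub>R d" x] by (simp add: mult_right_mono)
    also have "\<dots> = Lf * t * (norm d)^2" using that by (simp add: power2_eq_square)
    finally show ?thesis unfolding \<phi>'_def by (simp add: inner_diff_left)
  qed
  obtain t where "0 < t" and "\<phi> 1 - \<phi> 0 = \<phi>' t"
    using MVT2[of 0 1 \<phi> \<phi>'] \<phi>_deriv by auto
  then have "\<phi> 1 \<le> \<phi> 0" using \<phi>'_nonpos[of t] by linarith
  then show ?thesis unfolding \<phi>_def d_def by simp
qed

lemma not_backtrack_cond_if_small_stepsize: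
  fixes f :: "'a::real_inner \<Rightarrow> real"
  assumes f_grad: "\<And>x. (f has_derivative (\<lambda>h. inner (df x) h)) (at x)"
    and df_lip: "\<And>x y. norm (df x - df y) \<le> Lf * norm (x - y)"
    and Lf_pos: "Lf > 0" and \<gamma>_pos: "0 < \<gamma>" and \<gamma>_le: "\<gamma> \<le> (1 - \<beta>) / Lf"
  shows "\<not> backtrack_cond f df g \<beta> \<gamma> w"
proof -
  define R where "R = fb_R df g \<gamma> w"
  have T_eq: "fb_T df g \<gamma> w = w - \<gamma> *\<^sub>R R"
    using \<gamma>_pos unfolding R_def fb_R_def by simp
  have Lf_\<gamma>: "Lf * \<gamma> * \<gamma> \<le> (1 - \<beta>) * \<gamma>"
    using \<gamma>_pos \<gamma>_le Lf_pos by (intro mult_right_mono) (simp_all add: field_simps)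
  have "f (fb_T df g \<gamma> w) \<le> f w + inner (df w) (- (\<gamma> *\<^sub>R R)) + Lf / 2 * (norm (- (\<gamma> *\<^sub>R R)))\<^sup>2"
    using lipschitz_gradient_quadratic_upper_bound[OF f_grad df_lip, of "fb_T df g \<gamma> w" w]
    unfolding T_eq by simp
  also have "\<dots> = f w - \<gamma> * inner (df w) R + Lf * \<gamma> * \<gamma> / 2 * (norm R)\<^sup>2"
    using \<gamma>_pos by (simp add: power_mult_distrib power2_eq_square)
  also have "\<dots> \<le> f w - \<gamma> * inner (df w) R + (1 - \<beta>) * \<gamma> / 2 * (norm R)\<^sup>2"
    using Lf_\<gamma> by (simp add: mult_right_mono divide_right_mono)
  finally show ?thesis unfolding backtrack_cond_def R_def by simp
qed

lemma minfbe_step_stepsize_ge: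
  fixes f :: "'a::real_inner \<Rightarrow> real"
  assumes f_grad: "\<And>x. (f has_derivative (\<lambda>h. inner (df x) h)) (at x)"
    and df_lip: "\<And>x y. norm (df x - df y) \<le> Lf * norm (x - y)"
    and Lf_pos: "Lf > 0" and \<xi>_pos: "0 < \<xi>" and \<gamma>p_pos: "0 < \<gamma>p"
    and step: "minfbe_step f df g \<xi> \<beta> \<gamma>p x \<gamma> w x'"
  shows "\<gamma> \<ge> min \<gamma>p (\<xi> * (1 - \<beta>) / Lf)"
proof -
  obtain j where \<gamma>_eq: "\<gamma> = \<xi> ^ j * \<gamma>p"
    and rejected: "\<forall>i<j. \<exists>d \<tau>. backtrack_cond f df g \<beta> (\<xi> ^ i * \<gamma>p) (x + \<tau> *\<^sub>R d)"
    using step unfolding minfbe_step_def by blast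
  show ?thesis
  proof (cases j)
    case 0
    then show ?thesis using \<gamma>_eq by simp
  next
    case (Suc i)
    with rejected obtain d \<tau> where "backtrack_cond f df g \<beta> (\<xi> ^ i * \<gamma>p) (x + \<tau> *\<^sub>R d)"
      by blast
    moreover have "\<xi> ^ i * \<gamma>p > 0" using \<xi>_pos \<gamma>p_pos by simp
    ultimately have "(1 - \<beta>) / Lf < \<xi> ^ i * \<gamma>p"
      using not_backtrack_cond_if_small_stepsize[OF f_grad df_lip Lf_pos] by force
    then have "\<xi> * ((1 - \<beta>) / Lf) \<le> \<xi> * (\<xi> ^ i * \<gamma>p)"
      using \<xi>_pos by (intro mult_left_mono) auto
    then show ?thesis using \<gamma>_eq Suc by simp
  qed
qed

lemma minfbe_run_stepsize_ge:
  fixes f :: "'a::real_inner \<Rightarrow> real"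
  assumes f_grad: "\<And>x. (f has_derivative (\<lambda>h. inner (df x) h)) (at x)"
    and df_lip: "\<And>x y. norm (df x - df y) \<le> Lf * norm (x - y)"
    and Lf_pos: "Lf > 0" and \<xi>_pos: "0 < \<xi>" and \<gamma>0_pos: "0 < \<gamma>0" and \<beta>_lt: "\<beta> < 1"
    and run: "minfbe_run f df g \<gamma>0 \<xi> \<beta> K x w \<gamma>" and "k < K"
  shows "\<gamma> k \<ge> min \<gamma>0 (\<xi> * (1 - \<beta>) / Lf)"
  using \<open>k < K\<close>
proof (induction k)
  case 0
  then have "minfbe_step f df g \<xi> \<beta> \<gamma>0 (x 0) (\<gamma> 0) (w 0) (x 1)"
    using run unfolding minfbe_run_def by fastforce
  then show ?case
    using minfbe_step_stepsize_ge[OF f_grad df_lip Lf_pos \<xi>_pos \<gamma>0_pos] by blast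
next
  case (Suc k)
  then have step: "minfbe_step f df g \<xi> \<beta> (\<gamma> k) (x (Suc k)) (\<gamma> (Suc k)) (w (Suc k)) (x (Suc (Suc k)))"
    using run unfolding minfbe_run_def by fastforce
  have IH: "\<gamma> k \<ge> min \<gamma>0 (\<xi> * (1 - \<beta>) / Lf)" using Suc by simp
  moreover have "min \<gamma>0 (\<xi> * (1 - \<beta>) / Lf) > 0" using \<gamma>0_pos \<xi>_pos \<beta>_lt Lf_pos by simp
  ultimately have "\<gamma> k > 0" by linarith
  with IH show ?case
    using minfbe_step_stepsize_ge[OF f_grad df_lip Lf_pos \<xi>_pos _ step] by fastforce
qed

theorem lemma2p8:
  fixes f :: "'a::euclidean_space \<Rightarrow> real" and df :: "'a \<Rightarrow> 'a"
    and g :: "'a \<Rightarrow> ereal" and Lf M \<gamma>0 \<xi> \<beta> :: real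
  assumes f_grad: "\<And>x. (f has_derivative (\<lambda>h. inner (df x) h)) (at x)"
    and df_cont: "continuous_on UNIV df"
    and Lf_pos: "Lf > 0"
    and df_lip: "\<And>x y. norm (df x - df y) \<le> Lf * norm (x - y)"
    and g_proper: "proper_fun g" and g_closed: "closed_fun g"
    and M_pos: "M > 0" and g_wc: "weakly_convex M g"
    and \<gamma>0_pos: "\<gamma>0 > 0" and \<xi>: "0 < \<xi>" "\<xi> < 1" and \<beta>: "0 \<le> \<beta>" "\<beta> < 1"
  shows "(\<forall>\<gamma> w. 0 < \<gamma> \<and> \<gamma> < min ((1 - \<beta>) / Lf) (1 / M) \<longrightarrow> \<not> backtrack_cond f df g \<beta> \<gamma> w)
       \<and> (\<forall>K x w \<gamma>. K > 0 \<and> minfbe_run f df g \<gamma>0 \<xi> \<beta> K x w \<gamma> \<longrightarrow>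
            (\<forall>k<K. \<gamma> k \<ge> Min (\<gamma> ` {..<K}))
            \<and> Min (\<gamma> ` {..<K}) \<ge> min \<gamma>0 (min (\<xi> * (1 - \<beta>) / Lf) (1 / M))
            \<and> min \<gamma>0 (min (\<xi> * (1 - \<beta>) / Lf) (1 / M)) > 0)"
proof (intro conjI allI impI)
  fix \<gamma> w assume "0 < \<gamma> \<and> \<gamma> < min ((1 - \<beta>) / Lf) (1 / M)"
  then show "\<not> backtrack_cond f df g \<beta> \<gamma> w"
    using not_backtrack_cond_if_small_stepsize[OF f_grad df_lip Lf_pos] by simp
next
  fix K x w \<gamma> k assume "0 < K \<and> minfbe_run f df g \<gamma>0 \<xi> \<beta> K x w \<gamma>" and "k < K"
  then show "Min (\<gamma> ` {..<K}) \<le> \<gamma> k" by (intro Min_le) auto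
next
  fix K x w \<gamma> assume "0 < K \<and> minfbe_run f df g \<gamma>0 \<xi> \<beta> K x w \<gamma>"
  then show "min \<gamma>0 (min (\<xi> * (1 - \<beta>) / Lf) (1 / M)) \<le> Min (\<gamma> ` {..<K})"
    using minfbe_run_stepsize_ge[OF f_grad df_lip Lf_pos \<xi>(1) \<gamma>0_pos \<beta>(2)]
    by (subst Min_ge_iff) fastforce+
next
  show "min \<gamma>0 (min (\<xi> * (1 - \<beta>) / Lf) (1 / M)) > 0"
    using \<gamma>0_pos \<xi> \<beta> Lf_pos M_pos by simp
qed

end
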